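(* Let $k\ge 2$ be an integer and let $d_1\ge d_2\ge\cdots\ge d_k\ge 2$ be integers. If $r\ge d_1+k-1$, then for all sufficiently large $n$, $$ex\Big(n,K_r,\bigcup_{i=1}^k S_{d_i}\Big)\le \max_{1\le i\le k}\left\{\frac{d_i-1}{r-i+1}(n-i+1)\right\}.$$
   Context: $S_\ell$ denotes the star $K_{1,\ell}$ with $\ell$ edges, and $\bigcup_{i=1}^k S_{d_i}$ denotes the star forest that is the vertex-disjoint union of $S_{d_1},\dots,S_{d_k}$. For graphs $H$ and $F$, the generalized Turán number $ex(n,H,F)$ is the maximum number of copies of $H$ in an $n$-vertex graph containing no copy of $F$ as a subgraph; $K_r$ is the complete graph on $r$ vertices. *)

theory Defs
  imports Complex_Main
begin

definition graphs_on :: "nat \<Rightarrow> nat set set set" where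
  "graphs_on n = {E. \<forall>e\<in>E. e \<subseteq> {0..<n} \<and> card e = 2}"

definition num_cliques :: "nat \<Rightarrow> nat set set \<Rightarrow> nat \<Rightarrow> nat" where
  "num_cliques n E r = card {S. S \<subseteq> {0..<n} \<and> card S = r \<and>
       (\<forall>x\<in>S. \<forall>y\<in>S. x \<noteq> y \<longrightarrow> {x, y} \<in> E)}"

definition contains_star_forest :: "nat set set \<Rightarrow> nat \<Rightarrow> (nat \<Rightarrow> nat) \<Rightarrow> bool" where
  "contains_star_forest E k d \<longleftrightarrow>
     (\<exists>c L. inj_on c {1..k} \<and>
        (\<forall>i\<in>{1..k}. finite (L i) \<and> card (L i) = d i \<and> (\<forall>x\<in>L i. {c i, x} \<in> E)) \<and>
        (\<forall>i\<in>{1..k}. \<forall>j\<in>{1..k}. c i \<notin> L j) \<and>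
        (\<forall>i\<in>{1..k}. \<forall>j\<in>{1..k}. i \<noteq> j \<longrightarrow> L i \<inter> L j = {}))"

definition ex_clique_starforest :: "nat \<Rightarrow> nat \<Rightarrow> nat \<Rightarrow> (nat \<Rightarrow> nat) \<Rightarrow> nat" where
  "ex_clique_starforest n r k d =
     Max {num_cliques n E r | E. E \<in> graphs_on n \<and> \<not> contains_star_forest E k d}"

end

(* Call a vertex high if its degree is at least D = k + d_1 + ... + d_k.  A high vertex can always
   be completed greedily to a star of the forest, whatever the other stars are, so a
   star-forest-free graph has a set B of at most k - 1 high vertices, and k - |B| disjoint stars
   away from B would already complete to a forest.

   If |B| = k - 1, every vertex outside B has fewer than d_k neighbours outside B.  Hence every K_r
   contains B and meets the rest of the graph in exactly d_k vertices, r = d_k + k - 1, and these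
   d_k-sets are pairwise disjoint: there are at most (n - k + 1) / d_k copies of K_r.

   If |B| < k - 1, every K_r has more than d_1 vertices outside B, and a set of at most k D low
   vertices meets all copies of K_r, so their number is bounded by a constant.  In both cases the
   number of copies times r - k + 1 is at most n - k + 1 for large n. *)

theory Submission
  imports Defs "HOL-Library.Disjoint_Sets"
begin

definition neighbours :: "nat set set \<Rightarrow> nat \<Rightarrow> nat set" where
  "neighbours E v = {x. {v, x} \<in> E}"

lemma finite_neighbours: "E \<in> graphs_on n \<Longrightarrow> finite (neighbours E v)"
proof -
  assume "E \<in> graphs_on n"
  then have "neighbours E v \<subseteq> {0..<n}"
    unfolding graphs_on_def neighbours_def by blast
  then show ?thesis
    using finite_subset by blast
qed

lemma self_notin_neighbours: "E \<in> graphs_on n \<Longrightarrow> v \<notin> neighbours E v"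
  unfolding graphs_on_def neighbours_def by force

definition partial_star_forest ::
    "nat set set \<Rightarrow> nat set \<Rightarrow> nat set \<Rightarrow> (nat \<Rightarrow> nat) \<Rightarrow> (nat \<Rightarrow> nat set) \<Rightarrow> (nat \<Rightarrow> nat) \<Rightarrow> bool"
  where
  "partial_star_forest E K J c L d \<longleftrightarrow>
     inj_on c K \<and>
     (\<forall>i\<in>J. finite (L i) \<and> card (L i) = d i \<and> L i \<subseteq> neighbours E (c i) \<and> L i \<inter> c ` K = {}) \<and>
     disjoint_family_on L J"

lemma contains_star_forest_iff:
  "contains_star_forest E k d \<longleftrightarrow> (\<exists>c L. partial_star_forest E {1..k} {1..k} c L d)"
  unfolding contains_star_forest_def partial_star_forest_def disjoint_family_on_def neighbours_def
  by (intro ex_cong1) blast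

lemma partial_star_forest_extend:
  assumes psf: "partial_star_forest E K J c L d"
    and "finite K" "J \<subseteq> K" "a \<in> K - J"
    and high: "card K + sum d K \<le> card (neighbours E (c a))"
  obtains A where "partial_star_forest E K (insert a J) c (L(a := A)) d"
proof -
  define X where "X = neighbours E (c a) - c ` K - (\<Union>j\<in>J. L j)"
  have finJ: "finite J"
    using \<open>finite K\<close> \<open>J \<subseteq> K\<close> finite_subset by blast
  have "card (\<Union>j\<in>J. L j) \<le> sum d J"
    using card_UN_le[OF finJ, of L] psf unfolding partial_star_forest_def by simp
  moreover have "sum d J + d a \<le> sum d K"
    using \<open>finite K\<close> \<open>J \<subseteq> K\<close> \<open>a \<in> K - J\<close> finJ
    by (metis Diff_iff add.commute insert_subset sum.insert sum_mono2 zero_le)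
  moreover have "card (c ` K) \<le> card K"
    by (rule card_image_le[OF \<open>finite K\<close>])
  moreover have "card (neighbours E (c a)) - card (c ` K) - card (\<Union>j\<in>J. L j) \<le> card X"
  proof -
    have "finite (\<Union>j\<in>J. L j)"
      using finJ psf unfolding partial_star_forest_def by blast
    then show ?thesis
      unfolding X_def using \<open>finite K\<close>
      by (meson diff_card_le_card_Diff diff_le_mono finite_imageI le_trans)
  qed
  ultimately have "d a \<le> card X"
    using high by linarith
  then obtain A where A: "A \<subseteq> X" "card A = d a" "finite A"
    by (rule obtain_subset_with_card_n)
  have "partial_star_forest E K (insert a J) c (L(a := A)) d"
    using psf A \<open>a \<in> K - J\<close>
    unfolding partial_star_forest_def X_def
    by (auto simp: disjoint_family_on_insert) (auto simp: disjoint_family_on_def)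
  then show thesis ..
qed

lemma partial_star_forest_complete:
  assumes psf: "partial_star_forest E K J c L d"
    and "finite K" "J \<subseteq> K"
    and high: "\<forall>i\<in>K - J. card K + sum d K \<le> card (neighbours E (c i))"
  obtains L' where "partial_star_forest E K K c L' d"
proof -
  have "\<exists>L'. partial_star_forest E K (J \<union> I) c L' d" if "I \<subseteq> K - J" for I
    using finite_subset[OF that finite_Diff[OF \<open>finite K\<close>]] that
  proof (induction I rule: finite_subset_induct')
    case empty
    then show ?case
      using psf by auto
  next
    case (insert a I)
    then obtain L' where "partial_star_forest E K (J \<union> I) c L' d"
      by blast
    then obtain A where "partial_star_forest E K (insert a (J \<union> I)) c (L'(a := A)) d"
      by (rule partial_star_forest_extend) (use insert assms in auto)
    then show ?case
      by auto
  qed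
  then obtain L' where "partial_star_forest E K (J \<union> (K - J)) c L' d"
    by blast
  moreover have "J \<union> (K - J) = K"
    using \<open>J \<subseteq> K\<close> by blast
  ultimately show thesis
    using that by simp
qed

lemma contains_star_forest_from_outside_stars:
  assumes "finite B" "card B = m" "m \<le> k"
    and high: "\<forall>b\<in>B. k + sum d {1..k} \<le> card (neighbours E b)"
    and psf: "partial_star_forest E {m<..k} {m<..k} v L d"
    and outside: "v ` {m<..k} \<inter> B = {}" "(\<Union>i\<in>{m<..k}. L i) \<inter> B = {}"
  shows "contains_star_forest E k d"
proof -
  obtain b where b: "bij_betw b {1..m} B"
    using ex_bij_betw_nat_finite_1 \<open>finite B\<close> \<open>card B = m\<close> by blast
  define c where "c i = (if i \<le> m then b i else v i)" for i
  have "c ` {1..m} = b ` {1..m}" "inj_on c {1..m} \<longleftrightarrow> inj_on b {1..m}"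
    by (auto simp: c_def intro!: image_cong inj_on_cong)
  then have c_low: "c ` {1..m} = B" and inj_low: "inj_on c {1..m}"
    using b unfolding bij_betw_def by auto
  have "c ` {m<..k} = v ` {m<..k}" "inj_on c {m<..k} \<longleftrightarrow> inj_on v {m<..k}"
    by (auto simp: c_def intro!: image_cong inj_on_cong)
  then have c_high: "c ` {m<..k} = v ` {m<..k}" and inj_high: "inj_on c {m<..k}"
    using psf unfolding partial_star_forest_def by auto
  have split: "{1..k} = {1..m} \<union> {m<..k}"
    using \<open>m \<le> k\<close> by auto
  have "inj_on c {1..k}"
    unfolding split inj_on_Un using inj_low inj_high c_low c_high outside by blast
  then have "partial_star_forest E {1..k} {m<..k} c L d"
    using psf outside unfolding partial_star_forest_def split image_Un c_low c_high
    by (simp add: c_def Int_Un_distrib) blast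
  then obtain L' where "partial_star_forest E {1..k} {1..k} c L' d"
    by (rule partial_star_forest_complete) (use high c_low in auto)
  then show ?thesis
    unfolding contains_star_forest_iff by blast
qed

lemma card_high_vertices_less:
  assumes "finite B" and high: "\<forall>b\<in>B. k + sum d {1..k} \<le> card (neighbours E b)"
    and free: "\<not> contains_star_forest E k d"
  shows "card B < k"
proof (rule ccontr)
  assume "\<not> card B < k"
  then obtain T where T: "T \<subseteq> B" "card T = k" "finite T"
    by (meson not_less obtain_subset_with_card_n)
  have psf: "partial_star_forest E {k<..k} {k<..k} id (\<lambda>_. {}) d"
    by (simp add: partial_star_forest_def disjoint_family_on_def)
  have "contains_star_forest E k d"
    by (rule contains_star_forest_from_outside_stars[OF \<open>finite T\<close> \<open>card T = k\<close> order.refl _ psf])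
      (use high T(1) in auto)
  with free show False ..
qed

lemma card_outside_neighbours_less:
  assumes G: "E \<in> graphs_on n" and "finite B" "card B = k - 1" "1 \<le> k"
    and high: "\<forall>b\<in>B. k + sum d {1..k} \<le> card (neighbours E b)"
    and free: "\<not> contains_star_forest E k d" and "v \<notin> B"
  shows "card (neighbours E v - B) < d k"
proof (rule ccontr)
  assume "\<not> card (neighbours E v - B) < d k"
  then obtain A where A: "A \<subseteq> neighbours E v - B" "card A = d k" "finite A"
    by (meson not_less obtain_subset_with_card_n)
  have k: "{k - 1<..k} = {k}"
    using \<open>1 \<le> k\<close> by auto
  have psf: "partial_star_forest E {k - 1<..k} {k - 1<..k} (\<lambda>_. v) (\<lambda>_. A) d"
    using A self_notin_neighbours[OF G, of v]
    unfolding k partial_star_forest_def by (auto simp: disjoint_family_on_def)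
  have "contains_star_forest E k d"
    by (rule contains_star_forest_from_outside_stars[OF \<open>finite B\<close> \<open>card B = k - 1\<close> diff_le_self _ psf])
      (use A \<open>v \<notin> B\<close> high k in auto)
  with free show False ..
qed

definition cliques :: "nat \<Rightarrow> nat set set \<Rightarrow> nat \<Rightarrow> nat set set" where
  "cliques n E r = {S. S \<subseteq> {0..<n} \<and> card S = r \<and> (\<forall>x\<in>S. \<forall>y\<in>S. x \<noteq> y \<longrightarrow> {x, y} \<in> E)}"

lemma num_cliques_eq_card_cliques: "num_cliques n E r = card (cliques n E r)"
  unfolding num_cliques_def cliques_def ..

lemma finite_cliques: "finite (cliques n E r)"
proof -
  have "cliques n E r \<subseteq> Pow {0..<n}"
    unfolding cliques_def by auto
  then show ?thesis
    by (rule finite_subset) simp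
qed

lemma clique_minus_subset_neighbours:
  "S \<in> cliques n E r \<Longrightarrow> v \<in> S \<Longrightarrow> S - {v} \<subseteq> neighbours E v"
  unfolding cliques_def neighbours_def by auto

lemma clique_outside_part:
  assumes G: "E \<in> graphs_on n" and "finite B" "card B + t \<le> r"
    and sparse: "\<forall>v\<in>{0..<n} - B. card (neighbours E v - B) < t"
    and S: "S \<in> cliques n E r"
  shows "card (S - B) = t" and "B \<subseteq> S"
    and "w \<in> S - B \<Longrightarrow> S - B = insert w (neighbours E w - B)"
proof -
  have S_sub: "S \<subseteq> {0..<n}" and "card S = r" and "finite S"
    using S unfolding cliques_def by (auto intro: finite_subset)
  have outside: "S - B - {w} \<subseteq> neighbours E w - B" "card (neighbours E w - B) < t"
    if "w \<in> S - B" for w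
    using clique_minus_subset_neighbours[OF S] that sparse S_sub by auto
  have card_diff: "card (S - B) = card S - card (S \<inter> B)"
    using \<open>finite S\<close> by (simp add: card_Diff_subset_Int)
  have "card (S \<inter> B) \<le> card B"
    using \<open>finite B\<close> by (simp add: card_mono)
  then have lower: "t \<le> card (S - B)"
    using card_diff \<open>card S = r\<close> \<open>card B + t \<le> r\<close> by linarith
  show card_outside: "card (S - B) = t"
  proof (cases "S - B = {}")
    case False
    then obtain w where w: "w \<in> S - B"
      by blast
    have "card (S - B - {w}) \<le> card (neighbours E w - B)"
      using outside(1)[OF w] finite_neighbours[OF G] by (intro card_mono) auto
    then show ?thesis
      using outside(2)[OF w] w lower \<open>finite S\<close> by simp
  qed (metis lower card.empty le_zero_eq)
  show "B \<subseteq> S"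
  proof -
    have "card B \<le> card (S \<inter> B)"
      using card_diff card_outside \<open>card S = r\<close> \<open>card B + t \<le> r\<close>
        card_mono[OF \<open>finite S\<close>, of "S \<inter> B"] by linarith
    then have "S \<inter> B = B"
      using \<open>finite B\<close> by (intro card_seteq) auto
    then show ?thesis
      by blast
  qed
  show "S - B = insert w (neighbours E w - B)" if w: "w \<in> S - B"
  proof -
    have "card (neighbours E w - B) \<le> card (S - B - {w})"
      using outside(2)[OF w] card_outside w \<open>finite S\<close> by simp
    then have "S - B - {w} = neighbours E w - B"
      using outside(1)[OF w] finite_neighbours[OF G] by (intro card_seteq) auto
    then show ?thesis
      using w by blast
  qed
qed

lemma card_cliques_mult_le_if_sparse_outside:
  assumes G: "E \<in> graphs_on n" and "finite B" "B \<subseteq> {0..<n}" "card B + t \<le> r"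
    and sparse: "\<forall>v\<in>{0..<n} - B. card (neighbours E v - B) < t"
  shows "card (cliques n E r) * t \<le> n - card B"
proof -
  note part = clique_outside_part[OF G \<open>finite B\<close> \<open>card B + t \<le> r\<close> sparse]
  define T where "T = (\<lambda>S. S - B) ` cliques n E r"
  have "inj_on (\<lambda>S. S - B) (cliques n E r)"
    using part(2) by (intro inj_onI) (metis Diff_partition)
  then have card_T: "card T = card (cliques n E r)"
    unfolding T_def by (rule card_image)
  have "pairwise disjnt T"
  proof (rule pairwiseI)
    fix X Y assume "X \<in> T" "Y \<in> T" "X \<noteq> Y"
    then obtain S S' where "S \<in> cliques n E r" "S' \<in> cliques n E r" "X = S - B" "Y = S' - B"
      unfolding T_def by blast
    then show "disjnt X Y"
      using part(3) \<open>X \<noteq> Y\<close> unfolding disjnt_def by blast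
  qed
  moreover have X: "X \<subseteq> {0..<n} - B" "card X = t" if "X \<in> T" for X
    using that part(1) unfolding T_def cliques_def by auto
  ultimately have "card (\<Union>T) = sum card T"
    by (intro card_Union_disjoint) (auto intro: finite_subset)
  also have "\<dots> = card T * t"
    using X(2) by simp
  finally have "card (\<Union>T) = card T * t" .
  moreover have "\<Union>T \<subseteq> {0..<n} - B"
    using X(1) by blast
  ultimately have "card T * t \<le> card ({0..<n} - B)"
    by (metis card_mono finite_Diff finite_atLeastLessThan)
  then show ?thesis
    using card_T \<open>finite B\<close> \<open>B \<subseteq> {0..<n}\<close> by (simp add: card_Diff_subset)
qed

lemma ex_maximal_disjoint_subfamily:
  assumes "finite F"
  obtains G where "G \<subseteq> F" "pairwise disjnt G" "\<forall>A\<in>F. A \<noteq> {} \<longrightarrow> (\<exists>A'\<in>G. A \<inter> A' \<noteq> {})"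
proof -
  from assms have "\<exists>G \<subseteq> F. pairwise disjnt G \<and> (\<forall>A\<in>F. A \<noteq> {} \<longrightarrow> (\<exists>A'\<in>G. A \<inter> A' \<noteq> {}))"
  proof (induction F rule: finite_induct)
    case empty
    then show ?case
      by simp
  next
    case (insert A F)
    then obtain G where G: "G \<subseteq> F" "pairwise disjnt G" "\<forall>A\<in>F. A \<noteq> {} \<longrightarrow> (\<exists>A'\<in>G. A \<inter> A' \<noteq> {})"
      by blast
    show ?case
    proof (cases "A = {} \<or> (\<exists>A'\<in>G. A \<inter> A' \<noteq> {})")
      case True
      then show ?thesis
        using G by (intro exI[of _ G]) auto
    next
      case False
      then have "pairwise disjnt (insert A G)"
        using G(2) by (auto simp: pairwise_insert disjnt_def)
      then show ?thesis
        using G False by (intro exI[of _ "insert A G"]) auto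
    qed
  qed
  then show thesis
    using that by blast
qed

lemma card_disjoint_cliques_outside_less:
  assumes "finite B" "card B \<le> k"
    and high: "\<forall>b\<in>B. k + sum d {1..k} \<le> card (neighbours E b)"
    and free: "\<not> contains_star_forest E k d"
    and "pairwise disjnt QQ"
    and QQ: "\<forall>Q\<in>QQ. Q \<inter> B = {} \<and> (\<forall>i\<in>{1..k}. d i < card Q) \<and> (\<forall>x\<in>Q. Q - {x} \<subseteq> neighbours E x)"
  shows "card QQ < k - card B"
proof (rule ccontr)
  define m where "m = card B"
  assume "\<not> card QQ < k - card B"
  then obtain QQ' where "QQ' \<subseteq> QQ" "card QQ' = k - m" "finite QQ'"
    unfolding m_def by (meson not_less obtain_subset_with_card_n)
  then obtain g where g: "bij_betw g {m<..k} QQ'"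
    using finite_same_card_bij[of "{m<..k}" QQ'] by auto
  have g_QQ: "g i \<in> QQ" if "i \<in> {m<..k}" for i
    using bij_betw_apply[OF g that] \<open>QQ' \<subseteq> QQ\<close> by blast
  have g_disj: "disjoint_family_on g {m<..k}"
    using g \<open>pairwise disjnt QQ\<close> g_QQ
    unfolding disjoint_family_on_def bij_betw_def inj_on_def pairwise_def disjnt_def by metis
  have "\<exists>x A. x \<in> g i \<and> A \<subseteq> g i - {x} \<and> card A = d i \<and> finite A" if i: "i \<in> {m<..k}" for i
  proof -
    have "d i < card (g i)"
      using QQ g_QQ[OF i] i by auto
    then obtain x where "x \<in> g i"
      by fastforce
    then have "d i \<le> card (g i - {x})"
      using \<open>d i < card (g i)\<close> by (simp add: card_Diff_singleton_if)
    then show ?thesis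
      using \<open>x \<in> g i\<close> by (meson obtain_subset_with_card_n)
  qed
  then obtain v L where vL: "\<forall>i\<in>{m<..k}. v i \<in> g i \<and> L i \<subseteq> g i - {v i} \<and> card (L i) = d i \<and> finite (L i)"
    by metis
  have "partial_star_forest E {m<..k} {m<..k} v L d"
    unfolding partial_star_forest_def
  proof (intro conjI ballI)
    show "inj_on v {m<..k}"
      using vL g_disj by (intro inj_onI) (metis disjoint_family_onD disjoint_iff)
    show "disjoint_family_on L {m<..k}"
      by (rule disjoint_family_on_bisimulation[OF g_disj]) (use vL in blast)
  next
    fix i assume i: "i \<in> {m<..k}"
    show "finite (L i)" "card (L i) = d i"
      using vL i by auto
    show "L i \<subseteq> neighbours E (v i)"
      using vL i QQ g_QQ[OF i] by blast
    have "v j \<notin> L i" if j: "j \<in> {m<..k}" for j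
    proof (cases "j = i")
      case False
      then have "g j \<inter> g i = {}"
        using disjoint_family_onD[OF g_disj j i] by blast
      then show ?thesis
        using vL i j by blast
    qed (use vL i in blast)
    then show "L i \<inter> v ` {m<..k} = {}"
      by blast
  qed
  moreover have "v ` {m<..k} \<inter> B = {}" "(\<Union>i\<in>{m<..k}. L i) \<inter> B = {}"
    using vL QQ g_QQ by blast+
  moreover have "m \<le> k"
    using \<open>card B \<le> k\<close> m_def by simp
  ultimately have "contains_star_forest E k d"
    using contains_star_forest_from_outside_stars[OF \<open>finite B\<close> m_def[symmetric] _ high] by blast
  with free show False ..
qed

lemma card_cliques_le_if_hitting_set:
  assumes G: "E \<in> graphs_on n" and "finite U"
    and hit: "\<forall>S\<in>cliques n E r. S \<inter> U \<noteq> {}"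
    and low: "\<forall>u\<in>U. card (neighbours E u) < D"
  shows "card (cliques n E r) \<le> card U * 2 ^ D"
proof -
  have "cliques n E r \<subseteq> (\<Union>u\<in>U. Pow (insert u (neighbours E u)))"
  proof
    fix S assume S: "S \<in> cliques n E r"
    then obtain u where "u \<in> S" "u \<in> U"
      using hit by blast
    then show "S \<in> (\<Union>u\<in>U. Pow (insert u (neighbours E u)))"
      using clique_minus_subset_neighbours[OF S \<open>u \<in> S\<close>] by blast
  qed
  then have "card (cliques n E r) \<le> card (\<Union>u\<in>U. Pow (insert u (neighbours E u)))"
    by (rule card_mono[rotated]) (simp add: \<open>finite U\<close> finite_neighbours[OF G])
  also have "\<dots> \<le> (\<Sum>u\<in>U. card (Pow (insert u (neighbours E u))))"
    by (rule card_UN_le[OF \<open>finite U\<close>])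
  also have "\<dots> \<le> (\<Sum>u\<in>U. 2 ^ D)"
  proof (rule sum_mono)
    fix u assume "u \<in> U"
    then have "card (insert u (neighbours E u)) \<le> D"
      using low \<open>u \<in> U\<close> by (intro card_insert_le_m1) auto
    then show "card (Pow (insert u (neighbours E u))) \<le> 2 ^ D"
      by (simp add: card_Pow finite_neighbours[OF G] power_increasing)
  qed
  also have "\<dots> = card U * 2 ^ D"
    by simp
  finally show ?thesis .
qed

text \<open>The members of a maximal disjoint subfamily of \<open>R\<close> host disjoint stars away from \<open>B\<close>,
  so there are fewer than \<open>k\<close> of them, each of size at most \<open>D\<close>.\<close>
lemma ex_small_hitting_set:
  assumes G: "E \<in> graphs_on n" and free: "\<not> contains_star_forest E k d" and "finite B"
    and high: "\<forall>v\<in>B. k + sum d {1..k} \<le> card (neighbours E v)"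
    and low: "\<forall>v\<in>{0..<n} - B. card (neighbours E v) < D"
    and "finite R"
    and R: "\<forall>Q\<in>R. Q \<noteq> {} \<and> Q \<subseteq> {0..<n} - B \<and> (\<forall>i\<in>{1..k}. d i < card Q) \<and>
              (\<forall>x\<in>Q. Q - {x} \<subseteq> neighbours E x)"
  obtains U where "finite U" "card U \<le> k * D" "\<forall>u\<in>U. card (neighbours E u) < D"
    "\<forall>Q\<in>R. Q \<inter> U \<noteq> {}"
proof -
  obtain QQ where QQ: "QQ \<subseteq> R" "pairwise disjnt QQ" "\<forall>Q\<in>R. Q \<noteq> {} \<longrightarrow> (\<exists>Q'\<in>QQ. Q \<inter> Q' \<noteq> {})"
    by (rule ex_maximal_disjoint_subfamily[OF \<open>finite R\<close>])
  have Q_props: "Q \<noteq> {}" "Q \<subseteq> {0..<n} - B" "\<forall>i\<in>{1..k}. d i < card Q" "\<forall>x\<in>Q. Q - {x} \<subseteq> neighbours E x"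
    if "Q \<in> QQ" for Q
    using R that QQ(1) by blast+
  have "card B < k"
    by (rule card_high_vertices_less[OF \<open>finite B\<close> high free])
  have "\<forall>Q\<in>QQ. Q \<inter> B = {} \<and> (\<forall>i\<in>{1..k}. d i < card Q) \<and> (\<forall>x\<in>Q. Q - {x} \<subseteq> neighbours E x)"
  proof
    fix Q assume "Q \<in> QQ"
    then show "Q \<inter> B = {} \<and> (\<forall>i\<in>{1..k}. d i < card Q) \<and> (\<forall>x\<in>Q. Q - {x} \<subseteq> neighbours E x)"
      using Q_props(2-4)[OF \<open>Q \<in> QQ\<close>] by blast
  qed
  then have "card QQ < k - card B"
    by (rule card_disjoint_cliques_outside_less[OF \<open>finite B\<close> less_imp_le[OF \<open>card B < k\<close>] high free QQ(2)])
  define U where "U = \<Union>QQ"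
  have low_U: "\<forall>u\<in>U. card (neighbours E u) < D"
  proof
    fix u assume "u \<in> U"
    then obtain Q where "Q \<in> QQ" "u \<in> Q"
      unfolding U_def by blast
    then show "card (neighbours E u) < D"
      using low Q_props(2)[OF \<open>Q \<in> QQ\<close>] by blast
  qed
  have card_Q: "card Q \<le> D" if Q: "Q \<in> QQ" for Q
  proof -
    obtain x where "x \<in> Q"
      using Q_props(1)[OF Q] by blast
    then have "Q \<subseteq> insert x (neighbours E x)" and "x \<in> U"
      using Q_props(4)[OF Q] Q unfolding U_def by blast+
    then have "card Q \<le> card (insert x (neighbours E x))"
      using finite_neighbours[OF G] by (intro card_mono) auto
    also have "\<dots> \<le> D"
      using low_U \<open>x \<in> U\<close> by (intro card_insert_le_m1) auto
    finally show ?thesis .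
  qed
  have "card U \<le> sum card QQ"
    unfolding U_def by (rule card_Union_le_sum_card)
  also have "\<dots> \<le> card QQ * D"
    using sum_bounded_above[of QQ card D] card_Q by simp
  also have "\<dots> \<le> k * D"
    using \<open>card QQ < k - card B\<close> by (intro mult_le_mono1) linarith
  finally have card_U: "card U \<le> k * D" .
  have "U \<subseteq> {0..<n}"
    unfolding U_def using Q_props(2) by blast
  then have finite_U: "finite U"
    by (rule finite_subset) simp
  have hit: "\<forall>Q\<in>R. Q \<inter> U \<noteq> {}"
  proof
    fix Q assume "Q \<in> R"
    moreover from this have "Q \<noteq> {}"
      using R by blast
    ultimately obtain Q' where "Q' \<in> QQ" "Q \<inter> Q' \<noteq> {}"
      using QQ(3) by meson
    then show "Q \<inter> U \<noteq> {}"
      unfolding U_def by blast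
  qed
  show thesis
    by (rule that[OF finite_U card_U low_U hit])
qed

lemma card_cliques_le_if_few_high:
  assumes G: "E \<in> graphs_on n" and free: "\<not> contains_star_forest E k d" and "finite B"
    and high: "\<forall>v\<in>B. k + sum d {1..k} \<le> card (neighbours E v)"
    and low: "\<forall>v\<in>{0..<n} - B. card (neighbours E v) < D"
    and large: "\<forall>i\<in>{1..k}. d i + card B < r"
  shows "card (cliques n E r) \<le> k * D * 2 ^ D"
proof -
  have "1 \<in> {1..k}"
  proof (rule ccontr)
    assume "1 \<notin> {1..k}"
    then have "contains_star_forest E k d"
      by (simp add: contains_star_forest_def)
    with free show False ..
  qed
  define R where "R = (\<lambda>S. S - B) ` cliques n E r"
  have "finite R"
    unfolding R_def using finite_cliques by (rule finite_imageI)
  moreover have "\<forall>Q\<in>R. Q \<noteq> {} \<and> Q \<subseteq> {0..<n} - B \<and> (\<forall>i\<in>{1..k}. d i < card Q) \<and>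
      (\<forall>x\<in>Q. Q - {x} \<subseteq> neighbours E x)"
  proof
    fix Q assume "Q \<in> R"
    then obtain S where S: "S \<in> cliques n E r" "Q = S - B"
      unfolding R_def by blast
    have "card S - card B \<le> card Q"
      using S(2) \<open>finite B\<close> by (simp add: diff_card_le_card_Diff)
    moreover have "card S = r" "S \<subseteq> {0..<n}"
      using S(1) unfolding cliques_def by auto
    ultimately have "\<forall>i\<in>{1..k}. d i < card Q"
      using large by (auto dest!: bspec)
    moreover from this have "Q \<noteq> {}"
      using \<open>1 \<in> {1..k}\<close> by (metis card.empty not_less0)
    moreover have "Q \<subseteq> {0..<n} - B" "\<forall>x\<in>Q. Q - {x} \<subseteq> neighbours E x"
      using S clique_minus_subset_neighbours[OF S(1)] \<open>S \<subseteq> {0..<n}\<close> by blast+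
    ultimately show "Q \<noteq> {} \<and> Q \<subseteq> {0..<n} - B \<and> (\<forall>i\<in>{1..k}. d i < card Q) \<and>
        (\<forall>x\<in>Q. Q - {x} \<subseteq> neighbours E x)"
      by blast
  qed
  ultimately obtain U where U: "finite U" "card U \<le> k * D" "\<forall>u\<in>U. card (neighbours E u) < D"
    "\<forall>Q\<in>R. Q \<inter> U \<noteq> {}"
    by (rule ex_small_hitting_set[OF G free \<open>finite B\<close> high low])
  have "\<forall>S\<in>cliques n E r. S \<inter> U \<noteq> {}"
  proof
    fix S assume "S \<in> cliques n E r"
    then have "(S - B) \<inter> U \<noteq> {}"
      using U(4) unfolding R_def by blast
    then show "S \<inter> U \<noteq> {}"
      by blast
  qed
  then have "card (cliques n E r) \<le> card U * 2 ^ D"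
    by (rule card_cliques_le_if_hitting_set[OF G U(1) _ U(3)])
  also have "\<dots> \<le> k * D * 2 ^ D"
    using U(2) by simp
  finally show ?thesis .
qed

lemma card_cliques_mult_le_if_k_minus_one_high:
  assumes G: "E \<in> graphs_on n" and free: "\<not> contains_star_forest E k d"
    and "finite B" "B \<subseteq> {0..<n}" "card B = k - 1" "1 \<le> k"
    and high: "\<forall>b\<in>B. k + sum d {1..k} \<le> card (neighbours E b)"
    and "d k + k \<le> r + 1"
  shows "card (cliques n E r) * (r + 1 - k) \<le> n + 1 - k"
proof -
  have sparse: "\<forall>v\<in>{0..<n} - B. card (neighbours E v - B) < d k"
    using card_outside_neighbours_less[OF G \<open>finite B\<close> \<open>card B = k - 1\<close> \<open>1 \<le> k\<close> high free] by auto
  have "card B + d k \<le> r"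
    using \<open>d k + k \<le> r + 1\<close> \<open>card B = k - 1\<close> \<open>1 \<le> k\<close> by linarith
  note part = clique_outside_part[OF G \<open>finite B\<close> this sparse]
  show ?thesis
  proof (cases "cliques n E r = {}")
    case False
    then obtain S where S: "S \<in> cliques n E r"
      by blast
    then have "card S = r" "finite S"
      unfolding cliques_def by (auto intro: finite_subset)
    then have "r + 1 - k = d k"
      using part(1,2)[OF S] card_Diff_subset[OF \<open>finite B\<close>, of S] card_mono[of S B]
        \<open>card B = k - 1\<close> \<open>1 \<le> k\<close> by linarith
    then show ?thesis
      using card_cliques_mult_le_if_sparse_outside[OF G \<open>finite B\<close> \<open>B \<subseteq> {0..<n}\<close> \<open>card B + d k \<le> r\<close> sparse]
        \<open>card B = k - 1\<close> \<open>1 \<le> k\<close> by simp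
  qed simp
qed

lemma card_cliques_mult_le_if_star_forest_free:
  fixes k :: nat and d :: "nat \<Rightarrow> nat" and D :: nat
  defines "D \<equiv> k + sum d {1..k}"
  assumes G: "E \<in> graphs_on n" and free: "\<not> contains_star_forest E k d"
    and r: "\<forall>i\<in>{1..k}. d i + k \<le> r + 1"
    and n: "k * D * 2 ^ D * (r + 1 - k) + k \<le> n"
  shows "card (cliques n E r) * (r + 1 - k) \<le> n + 1 - k"
proof -
  define B where "B = {v\<in>{0..<n}. D \<le> card (neighbours E v)}"
  have "finite B" "B \<subseteq> {0..<n}"
    unfolding B_def by auto
  have high: "\<forall>v\<in>B. D \<le> card (neighbours E v)" and low: "\<forall>v\<in>{0..<n} - B. card (neighbours E v) < D"
    unfolding B_def by auto
  have "card B < k"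
    using card_high_vertices_less[OF \<open>finite B\<close> high[unfolded D_def] free] .
  show ?thesis
  proof (cases "card B = k - 1")
    case True
    then show ?thesis
      using card_cliques_mult_le_if_k_minus_one_high[OF G free \<open>finite B\<close> \<open>B \<subseteq> {0..<n}\<close> True _
          high[unfolded D_def]] r \<open>card B < k\<close> by simp
  next
    case False
    then have "\<forall>i\<in>{1..k}. d i + card B < r"
      using r \<open>card B < k\<close> by auto
    then have "card (cliques n E r) \<le> k * D * 2 ^ D"
      by (rule card_cliques_le_if_few_high[OF G free \<open>finite B\<close> high[unfolded D_def] low])
    then have "card (cliques n E r) * (r + 1 - k) \<le> k * D * 2 ^ D * (r + 1 - k)"
      by (rule mult_le_mono1)
    then show ?thesis
      using n by linarith
  qed
qed

lemma le_first_if_decreasing: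
  fixes d :: "nat \<Rightarrow> nat"
  assumes "\<forall>i\<in>{1..<k}. d (Suc i) \<le> d i" and "j \<in> {1..k}"
  shows "d j \<le> d 1"
proof -
  have "1 \<le> j" "j \<le> k"
    using assms(2) by auto
  from \<open>1 \<le> j\<close> show ?thesis
  proof (induction rule: dec_induct)
    case (step m)
    then have "d (Suc m) \<le> d m"
      using assms(1) \<open>j \<le> k\<close> by simp
    then show ?case
      using step.IH by (rule le_trans)
  qed simp
qed

lemma ex_clique_starforest_attained:
  assumes "i \<in> {1..k}" "0 < d i"
  obtains E where "E \<in> graphs_on n" "\<not> contains_star_forest E k d"
    "ex_clique_starforest n r k d = num_cliques n E r"
proof -
  define W where "W = (\<lambda>E. num_cliques n E r) ` {E \<in> graphs_on n. \<not> contains_star_forest E k d}"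
  have "ex_clique_starforest n r k d = Max W"
    unfolding ex_clique_starforest_def W_def by (simp add: setcompr_eq_image)
  have "\<not> contains_star_forest {} k d"
  proof
    assume "contains_star_forest {} k d"
    then obtain c L where "card (L i) = d i" "\<forall>x\<in>L i. {c i, x} \<in> ({} :: nat set set)"
      using \<open>i \<in> {1..k}\<close> unfolding contains_star_forest_def by blast
    then show False
      using \<open>0 < d i\<close> by auto
  qed
  moreover have "{} \<in> graphs_on n"
    by (simp add: graphs_on_def)
  ultimately have "W \<noteq> {}"
    unfolding W_def by blast
  moreover have "graphs_on n \<subseteq> Pow (Pow {0..<n})"
    unfolding graphs_on_def by auto
  then have "finite (graphs_on n)"
    by (rule finite_subset) simp
  then have "finite W"
    unfolding W_def by (simp add: finite_Collect_conjI)
  ultimately have "Max W \<in> W"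
    by (intro Max_in)
  then show thesis
    using that \<open>ex_clique_starforest n r k d = Max W\<close> unfolding W_def by auto
qed

lemma of_nat_le_mult_divide:
  fixes x a b :: nat and c :: real
  assumes "x * a \<le> b" "0 < a" "1 \<le> c"
  shows "real x \<le> c / real a * real b"
proof -
  have "real x * real a \<le> real b"
    using assms(1) by (metis of_nat_le_iff of_nat_mult)
  also have "\<dots> \<le> c * real b"
    using assms(3) by (simp add: mult_le_cancel_right1)
  finally show ?thesis
    using assms(2) by (simp add: field_simps)
qed

lemma ex_clique_starforest_le:
  fixes k r n :: nat and d :: "nat \<Rightarrow> nat"
  assumes "1 \<le> k" "2 \<le> d k" and r: "\<forall>i\<in>{1..k}. d i + k \<le> r + 1"
    and n: "k * (k + sum d {1..k}) * 2 ^ (k + sum d {1..k}) * (r + 1 - k) + k \<le> n"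
  shows "real (ex_clique_starforest n r k d)
           \<le> (real (d k) - 1) / (real r - real k + 1) * (real n - real k + 1)"
proof -
  obtain E where E: "E \<in> graphs_on n" "\<not> contains_star_forest E k d"
    and ex: "ex_clique_starforest n r k d = num_cliques n E r"
    by (rule ex_clique_starforest_attained[of k k d]) (use assms in auto)
  have "num_cliques n E r * (r + 1 - k) \<le> n + 1 - k"
    using card_cliques_mult_le_if_star_forest_free[OF E r n] by (simp add: num_cliques_eq_card_cliques)
  then have "real (ex_clique_starforest n r k d) \<le> (real (d k) - 1) / real (r + 1 - k) * real (n + 1 - k)"
    unfolding ex using assms(1,2) r[rule_format, of k] by (intro of_nat_le_mult_divide) auto
  also have "\<dots> = (real (d k) - 1) / (real r - real k + 1) * (real n - real k + 1)"
    using assms(1) r[rule_format, of k] n by (simp add: of_nat_diff algebra_simps)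
  finally show ?thesis .
qed

theorem corollary6p1:
  fixes k r :: nat and d :: "nat \<Rightarrow> nat"
  assumes "k \<ge> 2"
    and "\<forall>i\<in>{1..<k}. d i \<ge> d (Suc i)"
    and "d k \<ge> 2"
    and "r \<ge> d 1 + k - 1"
  shows "\<forall>\<^sub>F n in sequentially.
           real (ex_clique_starforest n r k d)
             \<le> Max ((\<lambda>i. (real (d i) - 1) / (real r - real i + 1) * (real n - real i + 1)) ` {1..k})"
proof (rule eventually_sequentiallyI)
  have d_le: "\<forall>i\<in>{1..k}. d i + k \<le> r + 1"
    using le_first_if_decreasing[OF assms(2)] assms(4) by fastforce
  fix n assume "k * (k + sum d {1..k}) * 2 ^ (k + sum d {1..k}) * (r + 1 - k) + k \<le> n"
  then have "real (ex_clique_starforest n r k d)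
      \<le> (real (d k) - 1) / (real r - real k + 1) * (real n - real k + 1)"
    using ex_clique_starforest_le[OF _ assms(3) d_le] assms(1) by simp
  also have "\<dots> \<le> Max ((\<lambda>i. (real (d i) - 1) / (real r - real i + 1) * (real n - real i + 1)) ` {1..k})"
    using assms(1) by (intro Max_ge) auto
  finally show "real (ex_clique_starforest n r k d)
      \<le> Max ((\<lambda>i. (real (d i) - 1) / (real r - real i + 1) * (real n - real i + 1)) ` {1..k})" .
qed

end
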